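(* Let $\mathbb{k}$ be an algebraically closed field of characteristic $0$, $r$ a positive integer and $\lambda\in\mathbb{k}^*\setminus\{\pm1\}$. Index rows by $(e,s)$ and columns by $(e',s')$ with $e,e'\in\{0,1\}$, $s,s'\in\{0,\dots,r-1\}$, ordered lexicographically. Then: (1) for every $a\in\mathbb{k}$, the $2r\times2r$ matrix $\big(\lambda^{(-1)^e(2s'+e')}(a+2s'+e')^s\big)$ is invertible; (2) for every $a\in\mathbb{k}$ and $b\in\mathbb{Q}$, the $2r\times2r$ matrix $\big(\lambda^{(-1)^e(b+2s'+e')}(a+2s'+e')^s\big)$ is invertible.
   Context: Convention: $0^0=1$. For $b\in\mathbb{Q}$, $\lambda^b$ denotes a fixed choice of $b$-th power of $\lambda$ (for $b=p/q$ in lowest terms, $\lambda^b=\mu^p$ for a fixed $\mu$ with $\mu^q=\lambda$), and $\lambda^{\pm(b+t)}:=(\lambda^b)^{\pm1}\lambda^{\pm t}$ for integers $t$. *)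

theory Defs
  imports "Jordan_Normal_Form.Matrix" "HOL-Computational_Algebra.Polynomial"
begin

text \<open>Rows indexed by i = e*r + s, columns by j = e'*r + s' (lexicographic order on (e,s)),
  with e, e' in {0,1} and s, s' in {0..r-1}.
  lb is the fixed choice of lambda^b, and the convention
  lambda^(+-(b+t)) = (lambda^b)^(+-1) * lambda^(+-t) is used.\<close>

definition cor_entry :: "'a::field \<Rightarrow> 'a \<Rightarrow> 'a \<Rightarrow> nat \<Rightarrow> nat \<Rightarrow> nat \<Rightarrow> nat \<Rightarrow> 'a" where
  "cor_entry lam lb a e s e' s' =
     (if e = 0 then lb * lam powi int (2*s' + e')
      else inverse lb * lam powi (- int (2*s' + e'))) * (a + of_nat (2*s' + e')) ^ s"

definition cor_mat :: "nat \<Rightarrow> 'a::field \<Rightarrow> 'a \<Rightarrow> 'a \<Rightarrow> 'a mat" where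
  "cor_mat r lam lb a = mat (2*r) (2*r)
     (\<lambda>(i,j). cor_entry lam lb a (i div r) (i mod r) (j div r) (j mod r))"

end

theory Submission
  imports Defs "Jordan_Normal_Form.Determinant"
begin

text \<open>Read the two halves of a vector v in the left kernel of the matrix as coefficient
  vectors of polynomials p, q of degree < r. Then v^T M = 0 says
  lb \<lambda>^t p(a + t) + lb^-1 \<lambda>^-t q(a + t) = 0 for t = 0, ..., 2r - 1; multiplying
  by lb \<lambda>^t gives P(t) \<mu>^t + Q(t) = 0 with \<mu> = \<lambda>^2 \<noteq> 0, 1, P = lb^2 p(a + x),
  Q = q(a + x). Such a combination with deg P < m, deg Q < n cannot vanish
  at 0, ..., m + n - 1 unless P = Q = 0: the operators P(x) \<mapsto> \<mu> P(x+1) - P(x) and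
  Q(x) \<mapsto> Q(x+1) - Q(x) keep the bound on P, lower the one on Q, and leave a combination
  vanishing at 0, ..., m + n - 2, so induction on n applies; the base case n = 0 is the
  fact that P has fewer than m roots. Only lb \<noteq> 0 matters, so the choice of \<lambda>^b is
  irrelevant.\<close>

lemma coeff_bound_iff:
  fixes p :: "'a::zero poly"
  shows "(\<forall>k\<ge>m. coeff p k = 0) \<longleftrightarrow> p = 0 \<or> degree p < m"
proof (cases "p = 0")
  case False
  have "(\<forall>k\<ge>m. coeff p k = 0) \<longleftrightarrow> degree p < m"
  proof
    assume "\<forall>k\<ge>m. coeff p k = 0"
    with False show "degree p < m"
      by (metis leading_coeff_0_iff not_le)
  qed (auto intro: coeff_eq_0)
  with False show ?thesis by simp
qed simp

lemma coeff_bound_pcompose_linear: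
  fixes p :: "'a::idom poly"
  assumes "\<forall>k\<ge>m. coeff p k = 0"
  shows "\<forall>k\<ge>m. coeff (p \<circ>\<^sub>p [:c, 1:]) k = 0"
  using assms by (auto simp: coeff_bound_iff degree_pcompose pcompose_eq_0_iff)

lemma coeff_bound_forward_difference:
  fixes q :: "'a::idom poly"
  assumes "\<forall>k\<ge>Suc n. coeff q k = 0"
  shows "\<forall>k\<ge>n. coeff (q \<circ>\<^sub>p [:1, 1:] - q) k = 0"
proof (cases "q = 0")
  case False
  then have "degree q \<le> n"
    using assms by (simp add: coeff_bound_iff)
  moreover have "coeff (q \<circ>\<^sub>p [:1, 1:] - q) k = 0" if "degree q \<le> k" for k
  proof (cases "k = degree q")
    case True
    then show ?thesis
      using lead_coeff_comp[of "[:1, 1:]" q] by (simp add: degree_pcompose)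
  next
    case False
    have "degree (q \<circ>\<^sub>p [:1, 1:] - q) \<le> degree q"
      by (intro degree_diff_le) (auto simp: degree_pcompose)
    with False that show ?thesis
      by (intro coeff_eq_0) auto
  qed
  ultimately show ?thesis by auto
qed simp

lemma poly_eq_0_if_vanishes_at_initial_nats:
  fixes p :: "'a::{idom, ring_char_0} poly"
  assumes "\<forall>k\<ge>m. coeff p k = 0" and "\<forall>t<m. poly p (of_nat t) = 0"
  shows "p = 0"
proof (rule ccontr)
  assume "p \<noteq> 0"
  have "of_nat ` {..<m} \<subseteq> {x. poly p x = 0}"
    using assms(2) by auto
  then have "card (of_nat ` {..<m} :: 'a set) \<le> card {x. poly p x = 0}"
    by (intro card_mono poly_roots_finite \<open>p \<noteq> 0\<close>)
  moreover have "card (of_nat ` {..<m} :: 'a set) = m"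
    by (simp add: card_image inj_on_def)
  ultimately show False
    using card_poly_roots_bound[OF \<open>p \<noteq> 0\<close>] assms(1) \<open>p \<noteq> 0\<close>
    by (simp add: coeff_bound_iff)
qed

lemma exp_poly_combination_vanishing_imp_zero:
  fixes \<mu> :: "'a::field_char_0"
  assumes "\<mu> \<noteq> 0" and "\<mu> \<noteq> 1"
    and "\<forall>k\<ge>m. coeff p k = 0" and "\<forall>k\<ge>n. coeff q k = 0"
    and "\<forall>t<m + n. poly p (of_nat t) * \<mu> ^ t + poly q (of_nat t) = 0"
  shows "p = 0 \<and> q = 0"
  using assms(3-)
proof (induction n arbitrary: p q)
  case 0
  then have "q = 0"
    by (intro poly_eqI) simp
  with 0 have "p = 0"
    using \<open>\<mu> \<noteq> 0\<close> by (intro poly_eq_0_if_vanishes_at_initial_nats[of m]) auto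
  with \<open>q = 0\<close> show ?case by simp
next
  case (Suc n)
  define p' where "p' = smult \<mu> (p \<circ>\<^sub>p [:1, 1:]) - p"
  define q' where "q' = q \<circ>\<^sub>p [:1, 1:] - q"
  have "\<forall>k\<ge>m. coeff p' k = 0"
    using Suc.prems(1) coeff_bound_pcompose_linear[OF Suc.prems(1)] by (simp add: p'_def)
  moreover have "\<forall>k\<ge>n. coeff q' k = 0"
    unfolding q'_def by (rule coeff_bound_forward_difference) fact
  moreover have "\<forall>t<m + n. poly p' (of_nat t) * \<mu> ^ t + poly q' (of_nat t) = 0"
  proof (intro allI impI)
    fix t assume "t < m + n"
    then have "poly p (of_nat (Suc t)) * \<mu> ^ Suc t + poly q (of_nat (Suc t)) = 0"
      and "poly p (of_nat t) * \<mu> ^ t + poly q (of_nat t) = 0"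
      using Suc.prems(3) by auto
    moreover have "poly p' (of_nat t) * \<mu> ^ t + poly q' (of_nat t)
      = (poly p (of_nat (Suc t)) * \<mu> ^ Suc t + poly q (of_nat (Suc t)))
        - (poly p (of_nat t) * \<mu> ^ t + poly q (of_nat t))"
      by (simp add: p'_def q'_def poly_pcompose algebra_simps)
    ultimately show "poly p' (of_nat t) * \<mu> ^ t + poly q' (of_nat t) = 0"
      by simp
  qed
  ultimately have "p' = 0" and "q' = 0"
    using Suc.IH by auto
  have "p = 0"
  proof (rule ccontr)
    assume "p \<noteq> 0"
    from \<open>p' = 0\<close> have "lead_coeff (smult \<mu> (p \<circ>\<^sub>p [:1, 1:])) = lead_coeff p"
      by (simp add: p'_def)
    then have "\<mu> * lead_coeff p = lead_coeff p"
      using lead_coeff_comp[of "[:1, 1:]" p] \<open>\<mu> \<noteq> 0\<close> by (simp add: degree_pcompose)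
    with \<open>\<mu> \<noteq> 1\<close> \<open>p \<noteq> 0\<close> show False by simp
  qed
  have q_const: "poly q (of_nat t) = poly q 0" for t
  proof (induction t)
    case (Suc t)
    from \<open>q' = 0\<close> have "poly q' (of_nat t) = 0" by simp
    with Suc show ?case
      by (simp add: q'_def poly_pcompose add.commute)
  qed simp
  have "poly q 0 = 0"
    using Suc.prems(3)[rule_format, of 0] \<open>p = 0\<close> by simp
  then have "q = 0"
    using q_const by (intro poly_eq_0_if_vanishes_at_initial_nats[of "Suc (degree q)"])
      (auto intro: coeff_eq_0)
  with \<open>p = 0\<close> show ?case by simp
qed

lemma invertible_mat_if_left_kernel_trivial:
  fixes A :: "'a::field mat"
  assumes A: "A \<in> carrier_mat n n"
    and kernel: "\<And>v. v \<in> carrier_vec n \<Longrightarrow> transpose_mat A *\<^sub>v v = 0\<^sub>v n \<Longrightarrow> v = 0\<^sub>v n"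
  shows "invertible_mat A"
proof -
  have "det (transpose_mat A) \<noteq> 0"
    using kernel det_0_iff_vec_prod_zero[of "transpose_mat A" n] A by auto
  then have "det A \<noteq> 0"
    using det_transpose[OF A] by simp
  from det_non_zero_imp_unit[OF A this] obtain B
    where "B \<in> carrier_mat n n" "B * A = 1\<^sub>m n" "A * B = 1\<^sub>m n"
    unfolding Units_def ring_mat_def by auto
  with A show ?thesis
    unfolding invertible_mat_def inverts_mat_def by auto
qed

lemma parity_index_less:
  fixes t r :: nat
  assumes "t < 2 * r"
  shows "(t mod 2) * r + t div 2 < 2 * r"
  using assms by (cases "t mod 2 = 0") auto

text \<open>The column (e', s') = (t mod 2, t div 2) is the one with exponent t = 2 s' + e'.\<close>
lemma cor_mat_column_entries:
  assumes "t < 2 * r" and "s < r"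
  shows "cor_mat r lam lb a $$ (s, (t mod 2) * r + t div 2) = lb * lam ^ t * (a + of_nat t) ^ s"
    and "cor_mat r lam lb a $$ (r + s, (t mod 2) * r + t div 2)
      = inverse lb * inverse (lam ^ t) * (a + of_nat t) ^ s"
proof -
  have col: "((t mod 2) * r + t div 2) div r = t mod 2" "((t mod 2) * r + t div 2) mod r = t div 2"
    using assms by (cases "t mod 2 = 0"; auto)+
  have t: "2 * (t div 2) + t mod 2 = t"
    by simp
  show "cor_mat r lam lb a $$ (s, (t mod 2) * r + t div 2) = lb * lam ^ t * (a + of_nat t) ^ s"
    using assms col t parity_index_less[OF assms(1)] unfolding cor_mat_def cor_entry_def
    by (simp add: power_int_of_nat del: of_nat_add)
  show "cor_mat r lam lb a $$ (r + s, (t mod 2) * r + t div 2)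
      = inverse lb * inverse (lam ^ t) * (a + of_nat t) ^ s"
    using assms col t parity_index_less[OF assms(1)] unfolding cor_mat_def cor_entry_def
    by (simp add: power_int_minus power_int_of_nat del: of_nat_add)
qed

lemma cor_mat_transpose_mult_vec:
  assumes "v \<in> carrier_vec (2 * r)" and "t < 2 * r"
  shows "(transpose_mat (cor_mat r lam lb a) *\<^sub>v v) $ ((t mod 2) * r + t div 2)
    = lb * lam ^ t * (\<Sum>s<r. v $ s * (a + of_nat t) ^ s)
      + inverse lb * inverse (lam ^ t) * (\<Sum>s<r. v $ (r + s) * (a + of_nat t) ^ s)"
proof -
  let ?M = "cor_mat r lam lb a" and ?j = "(t mod 2) * r + t div 2"
  have "?M \<in> carrier_mat (2 * r) (2 * r)"
    by (simp add: cor_mat_def)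
  moreover have "?j < 2 * r"
    using parity_index_less[OF assms(2)] .
  ultimately have "(transpose_mat ?M *\<^sub>v v) $ ?j = (\<Sum>i\<in>{0..<2 * r}. ?M $$ (i, ?j) * v $ i)"
    using assms(1) by (simp add: scalar_prod_def mult.commute)
  also have "\<dots> = (\<Sum>s<r. ?M $$ (s, ?j) * v $ s) + (\<Sum>s<r. ?M $$ (r + s, ?j) * v $ (r + s))"
    by (simp add: mult_2 sum.atLeastLessThan_concat[of 0 r "r + r", symmetric]
        sum.shift_bounds_nat_ivl[of _ 0 r r, simplified] lessThan_atLeast0 add.commute)
  also have "\<dots> = (\<Sum>s<r. lb * lam ^ t * (a + of_nat t) ^ s * v $ s)
      + (\<Sum>s<r. inverse lb * inverse (lam ^ t) * (a + of_nat t) ^ s * v $ (r + s))"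
    using assms(2) by (intro arg_cong2[where f = "(+)"] sum.cong) (simp_all add: cor_mat_column_entries)
  also have "\<dots> = lb * lam ^ t * (\<Sum>s<r. v $ s * (a + of_nat t) ^ s)
      + inverse lb * inverse (lam ^ t) * (\<Sum>s<r. v $ (r + s) * (a + of_nat t) ^ s)"
    by (simp add: sum_distrib_left mult_ac)
  finally show ?thesis .
qed

lemma cor_mat_left_kernel_trivial:
  fixes lam lb a :: "'a::field_char_0"
  assumes "lam \<noteq> 0" and "lam \<noteq> 1" and "lam \<noteq> -1" and "lb \<noteq> 0"
    and v: "v \<in> carrier_vec (2 * r)" "transpose_mat (cor_mat r lam lb a) *\<^sub>v v = 0\<^sub>v (2 * r)"
  shows "v = 0\<^sub>v (2 * r)"
proof -
  define p where "p = (\<Sum>s<r. monom (v $ s) s)"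
  define q where "q = (\<Sum>s<r. monom (v $ (r + s)) s)"
  have coeff_p: "coeff p k = (if k < r then v $ k else 0)" for k
    by (simp add: p_def coeff_sum coeff_monom)
  have coeff_q: "coeff q k = (if k < r then v $ (r + k) else 0)" for k
    by (simp add: q_def coeff_sum coeff_monom)
  define p' where "p' = smult (lb\<^sup>2) (p \<circ>\<^sub>p [:a, 1:])"
  define q' where "q' = q \<circ>\<^sub>p [:a, 1:]"
  have "poly p' (of_nat t) * (lam\<^sup>2) ^ t + poly q' (of_nat t) = 0" if "t < r + r" for t
  proof -
    from that have "t < 2 * r"
      by simp
    then have "lb * lam ^ t * poly p (a + of_nat t)
        + inverse lb * inverse (lam ^ t) * poly q (a + of_nat t) = 0"
      using cor_mat_transpose_mult_vec[OF v(1), of t lam lb a] parity_index_less[of t r] v(2)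
      by (simp add: p_def q_def poly_sum poly_monom mult.commute)
    moreover have "poly p' (of_nat t) * (lam\<^sup>2) ^ t + poly q' (of_nat t) = lb * lam ^ t *
        (lb * lam ^ t * poly p (a + of_nat t) + inverse lb * inverse (lam ^ t) * poly q (a + of_nat t))"
      using \<open>lb \<noteq> 0\<close> \<open>lam \<noteq> 0\<close>
      by (simp add: p'_def q'_def poly_pcompose field_simps power2_eq_square power_mult_distrib)
    ultimately show ?thesis
      by simp
  qed
  moreover have "lam\<^sup>2 \<noteq> 0" and "lam\<^sup>2 \<noteq> 1"
    using assms(1-3) by (auto simp: power2_eq_1_iff)
  moreover have "\<forall>k\<ge>r. coeff p' k = 0" and "\<forall>k\<ge>r. coeff q' k = 0"
    using coeff_bound_pcompose_linear[of r p a] coeff_bound_pcompose_linear[of r q a]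
    by (simp_all add: p'_def q'_def coeff_p coeff_q)
  ultimately have "p' = 0" and "q' = 0"
    using exp_poly_combination_vanishing_imp_zero by blast+
  then have "p = 0" and "q = 0"
    using \<open>lb \<noteq> 0\<close> by (auto simp: p'_def q'_def pcompose_eq_0_iff)
  show "v = 0\<^sub>v (2 * r)"
  proof (rule eq_vecI)
    fix i assume "i < dim_vec (0\<^sub>v (2 * r) :: 'a vec)"
    then have i: "i < 2 * r" by simp
    show "v $ i = 0\<^sub>v (2 * r) $ i"
    proof (cases "i < r")
      case True
      then show ?thesis using coeff_p[of i] \<open>p = 0\<close> i by simp
    next
      case False
      then have "i - r < r" and "r + (i - r) = i" using i by auto
      then show ?thesis using coeff_q[of "i - r"] \<open>q = 0\<close> i by simp
    qed
  qed (use v(1) in simp)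
qed

lemma cor_mat_invertible:
  fixes lam lb a :: "'a::field_char_0"
  assumes "lam \<noteq> 0" and "lam \<noteq> 1" and "lam \<noteq> -1" and "lb \<noteq> 0"
  shows "invertible_mat (cor_mat r lam lb a)"
  using cor_mat_left_kernel_trivial[OF assms]
  by (intro invertible_mat_if_left_kernel_trivial[of _ "2 * r"]) (auto simp: cor_mat_def)

theorem corollary2p14:
  fixes lam :: "'a::{alg_closed_field, field_char_0}" and r :: nat
  assumes "r > 0" and "lam \<noteq> 0" and "lam \<noteq> 1" and "lam \<noteq> -1"
  shows "(\<forall>a::'a. invertible_mat (cor_mat r lam 1 a))
       \<and> (\<forall>(a::'a) (b::rat) (mu::'a).
            mu ^ nat (snd (quotient_of b)) = lam
            \<longrightarrow> invertible_mat (cor_mat r lam (mu powi fst (quotient_of b)) a))"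
proof (intro conjI allI impI)
  fix a :: 'a
  show "invertible_mat (cor_mat r lam 1 a)"
    using cor_mat_invertible[OF assms(2-4)] by simp
next
  fix a :: 'a and b :: rat and mu :: 'a
  assume "mu ^ nat (snd (quotient_of b)) = lam"
  with assms(2,3) have "mu \<noteq> 0"
    by (cases "nat (snd (quotient_of b)) = 0") auto
  then show "invertible_mat (cor_mat r lam (mu powi fst (quotient_of b)) a)"
    using cor_mat_invertible[OF assms(2-4)] by simp
qed

end
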